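(* Let $(E\to M,\rho,\langle\cdot,\cdot\rangle,\circ)$ be a Courant algebroid and $(\mathbf I,\mathbf J,\mathbf K)$ an almost hypercomplex structure on $E$. If there exists a hypercomplex connection $\nabla$ satisfying $\nabla\mathbf I=\nabla\mathbf J=\nabla\mathbf K=0$ and, for all $X,Y\in\Gamma(E)$, $$T(X,Y)=\mathbf ID\langle X,\mathbf IY\rangle+\mathbf JD\langle X,\mathbf JY\rangle+\mathbf KD\langle X,\mathbf KY\rangle,$$ then $N_{\mathbf I,\mathbf J}=0$.
   Context: A Courant algebroid $(E\to M,\rho,\langle\cdot,\cdot\rangle,\circ)$ consists of a real vector bundle $E\to M$ over a smooth manifold, a nondegenerate symmetric fiberwise bilinear pairing $\langle\cdot,\cdot\rangle$ on $E$, a vector bundle map $\rho:E\to TM$ (the anchor), and an $\mathbb R$-bilinear operation $\circ$ on $\Gamma(E)$ (the Dorfman bracket) such that for all $f\in C^\infty(M)$, $x,y,z\in\Gamma(E)$: $x\circ(y\circ z)=(x\circ y)\circ z+y\circ(x\circ z)$; $\rho(x\circ y)=[\rho(x),\rho(y)]$; $x\circ(fy)=(\rho(x)f)y+f(x\circ y)$; $x\circ y+y\circ x=2D\langle x,y\rangle$; $(Df)\circ x=0$; $\rho(x)\langle y,z\rangle=\langle x\circ y,z\rangle+\langle y,x\circ z\rangle$. Here $D:C^\infty(M)\to\Gamma(E)$ is the $\mathbb R$-linear map defined by $\langle Df,x\rangle=\tfrac12\rho(x)f$. The Courant bracket is $[\![x,y]\!]=\tfrac12(x\circ y-y\circ x)$.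 For vector bundle endomorphisms $F,G$ of $E$ (over $\mathrm{id}_M$), the Nijenhuis concomitant is the tensor $N_{F,G}:E\otimes E\to E$ given by $N_{F,G}(X,Y)=FX\circ GY-F(X\circ GY)-G(FX\circ Y)+FG(X\circ Y)+GX\circ FY-G(X\circ FY)-F(GX\circ Y)+GF(X\circ Y)$. An almost hypercomplex structure on $E$ is a triple $(\mathbf I,\mathbf J,\mathbf K)$ of vector bundle endomorphisms of $E$ over $\mathrm{id}_M$, each orthogonal for $\langle\cdot,\cdot\rangle$, with $\mathbf I^2=\mathbf J^2=\mathbf K^2=\mathbf I\mathbf J\mathbf K=-1$. Given an almost hypercomplex structure, for $f\in C^\infty(M)$ and $X,Y\in\Gamma(E)$ set $\Delta_f(X,Y)=\langle X,Y\rangle Df+\langle\mathbf IX,Y\rangle\mathbf I Df+\langle\mathbf JX,Y\rangle\mathbf JDf+\langle\mathbf KX,Y\rangle\mathbf KDf$. A hypercomplex connection is an $\mathbb R$-bilinear map $\Gamma(E)\times\Gamma(E)\to\Gamma(E)$, $(X,Y)\mapsto\nabla_XY$, with $\nabla_{fX}Y=f\nabla_XY$ and $\nabla_X(fY)=(\rho(X)f)Y+f\nabla_XY-\Delta_f(X,Y)$. Its torsion is $T(X,Y)=\nabla_XY-\nabla_YX-[\![X,Y]\!]$. For an endomorphism $P$ of $E$, $(\nabla_XP)Y:=\nabla_X(PY)-P(\nabla_XY)$, and $\nabla P=0$ means this vanishes for all $X,Y$. *)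

theory Defs
  imports Main Complex_Main
begin

text \<open>Algebraic model: C = C^infinity(M) is a commutative real algebra 'f,
Gamma(E) is a module 'e over it via smul. Vector fields are derivations of 'f.\<close>

definition is_derivation :: "('f::{real_algebra_1,comm_ring_1} \<Rightarrow> 'f) \<Rightarrow> bool" where
  "is_derivation V \<longleftrightarrow>
     (\<forall>f g. V (f + g) = V f + V g) \<and>
     (\<forall>(c::real) f. V (of_real c * f) = of_real c * V f) \<and>
     (\<forall>f g. V (f * g) = f * V g + g * V f)"

definition c_linear :: "('f::{real_algebra_1,comm_ring_1} \<Rightarrow> 'e::ab_group_add \<Rightarrow> 'e) \<Rightarrow> ('e \<Rightarrow> 'e) \<Rightarrow> bool" where
  "c_linear smul F \<longleftrightarrow> (\<forall>x y. F (x + y) = F x + F y) \<and> (\<forall>f x. F (smul f x) = smul f (F x))"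

definition courant_algebroid ::
  "('f::{real_algebra_1,comm_ring_1} \<Rightarrow> 'e::ab_group_add \<Rightarrow> 'e) \<Rightarrow> ('e \<Rightarrow> 'f \<Rightarrow> 'f)
   \<Rightarrow> ('e \<Rightarrow> 'e \<Rightarrow> 'f) \<Rightarrow> ('e \<Rightarrow> 'e \<Rightarrow> 'e) \<Rightarrow> ('f \<Rightarrow> 'e) \<Rightarrow> bool" where
  "courant_algebroid smul rho pair circ D \<longleftrightarrow>
     module smul \<and>
     \<comment> \<open>anchor: bundle map E -> TM\<close>
     (\<forall>x. is_derivation (rho x)) \<and>
     (\<forall>x y g. rho (x + y) g = rho x g + rho y g) \<and>
     (\<forall>f x g. rho (smul f x) g = f * rho x g) \<and>
     \<comment> \<open>pairing: symmetric, C-bilinear, nondegenerate\<close>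
     (\<forall>x y z. pair (x + y) z = pair x z + pair y z) \<and>
     (\<forall>f x y. pair (smul f x) y = f * pair x y) \<and>
     (\<forall>x y. pair x y = pair y x) \<and>
     (\<forall>x. (\<forall>y. pair x y = 0) \<longrightarrow> x = 0) \<and>
     (\<forall>\<phi>. ((\<forall>y z. \<phi> (y + z) = \<phi> y + \<phi> z) \<and> (\<forall>f y. \<phi> (smul f y) = f * \<phi> y))
           \<longrightarrow> (\<exists>x. \<forall>y. \<phi> y = pair x y)) \<and>
     \<comment> \<open>Dorfman bracket is R-bilinear\<close>
     (\<forall>x y z. circ (x + y) z = circ x z + circ y z) \<and>
     (\<forall>x y z. circ x (y + z) = circ x y + circ x z) \<and>
     (\<forall>(c::real) x y. circ (smul (of_real c) x) y = smul (of_real c) (circ x y)) \<and>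
     (\<forall>(c::real) x y. circ x (smul (of_real c) y) = smul (of_real c) (circ x y)) \<and>
     \<comment> \<open>D\<close>
     (\<forall>f x. pair (D f) x = of_real (1/2) * rho x f) \<and>
     \<comment> \<open>axioms\<close>
     (\<forall>x y z. circ x (circ y z) = circ (circ x y) z + circ y (circ x z)) \<and>
     (\<forall>x y g. rho (circ x y) g = rho x (rho y g) - rho y (rho x g)) \<and>
     (\<forall>x f y. circ x (smul f y) = smul (rho x f) y + smul f (circ x y)) \<and>
     (\<forall>x y. circ x y + circ y x = smul 2 (D (pair x y))) \<and>
     (\<forall>f x. circ (D f) x = 0) \<and>
     (\<forall>x y z. rho x (pair y z) = pair (circ x y) z + pair y (circ x z))"

definition courant_bracket ::
  "('f::{real_algebra_1,comm_ring_1} \<Rightarrow> 'e::ab_group_add \<Rightarrow> 'e) \<Rightarrow> ('e \<Rightarrow> 'e \<Rightarrow> 'e) \<Rightarrow> 'e \<Rightarrow> 'e \<Rightarrow> 'e" where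
  "courant_bracket smul circ x y = smul (of_real (1/2)) (circ x y - circ y x)"

definition nijenhuis_concomitant ::
  "('e::ab_group_add \<Rightarrow> 'e \<Rightarrow> 'e) \<Rightarrow> ('e \<Rightarrow> 'e) \<Rightarrow> ('e \<Rightarrow> 'e) \<Rightarrow> 'e \<Rightarrow> 'e \<Rightarrow> 'e" where
  "nijenhuis_concomitant circ F G X Y =
     circ (F X) (G Y) - F (circ X (G Y)) - G (circ (F X) Y) + F (G (circ X Y))
     + circ (G X) (F Y) - G (circ X (F Y)) - F (circ (G X) Y) + G (F (circ X Y))"

definition almost_hypercomplex ::
  "('f::{real_algebra_1,comm_ring_1} \<Rightarrow> 'e::ab_group_add \<Rightarrow> 'e) \<Rightarrow> ('e \<Rightarrow> 'e \<Rightarrow> 'f)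
   \<Rightarrow> ('e \<Rightarrow> 'e) \<Rightarrow> ('e \<Rightarrow> 'e) \<Rightarrow> ('e \<Rightarrow> 'e) \<Rightarrow> bool" where
  "almost_hypercomplex smul pair I J K \<longleftrightarrow>
     (\<forall>F \<in> {I, J, K}. c_linear smul F \<and> (\<forall>x y. pair (F x) (F y) = pair x y)) \<and>
     (\<forall>x. I (I x) = - x) \<and> (\<forall>x. J (J x) = - x) \<and> (\<forall>x. K (K x) = - x) \<and>
     (\<forall>x. I (J (K x)) = - x)"

definition hc_Delta ::
  "('f::{real_algebra_1,comm_ring_1} \<Rightarrow> 'e::ab_group_add \<Rightarrow> 'e) \<Rightarrow> ('e \<Rightarrow> 'e \<Rightarrow> 'f) \<Rightarrow> ('f \<Rightarrow> 'e)
   \<Rightarrow> ('e \<Rightarrow> 'e) \<Rightarrow> ('e \<Rightarrow> 'e) \<Rightarrow> ('e \<Rightarrow> 'e) \<Rightarrow> 'f \<Rightarrow> 'e \<Rightarrow> 'e \<Rightarrow> 'e" where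
  "hc_Delta smul pair D I J K f X Y =
     smul (pair X Y) (D f) + smul (pair (I X) Y) (I (D f))
     + smul (pair (J X) Y) (J (D f)) + smul (pair (K X) Y) (K (D f))"

definition hypercomplex_connection ::
  "('f::{real_algebra_1,comm_ring_1} \<Rightarrow> 'e::ab_group_add \<Rightarrow> 'e) \<Rightarrow> ('e \<Rightarrow> 'f \<Rightarrow> 'f) \<Rightarrow> ('e \<Rightarrow> 'e \<Rightarrow> 'f)
   \<Rightarrow> ('f \<Rightarrow> 'e) \<Rightarrow> ('e \<Rightarrow> 'e) \<Rightarrow> ('e \<Rightarrow> 'e) \<Rightarrow> ('e \<Rightarrow> 'e) \<Rightarrow> ('e \<Rightarrow> 'e \<Rightarrow> 'e) \<Rightarrow> bool" where
  "hypercomplex_connection smul rho pair D I J K nabla \<longleftrightarrow>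
     (\<forall>X Y Z. nabla (X + Y) Z = nabla X Z + nabla Y Z) \<and>
     (\<forall>X Y Z. nabla X (Y + Z) = nabla X Y + nabla X Z) \<and>
     (\<forall>(c::real) X Y. nabla X (smul (of_real c) Y) = smul (of_real c) (nabla X Y)) \<and>
     (\<forall>f X Y. nabla (smul f X) Y = smul f (nabla X Y)) \<and>
     (\<forall>f X Y. nabla X (smul f Y) =
        smul (rho X f) Y + smul f (nabla X Y) - hc_Delta smul pair D I J K f X Y)"

definition torsion ::
  "('f::{real_algebra_1,comm_ring_1} \<Rightarrow> 'e::ab_group_add \<Rightarrow> 'e) \<Rightarrow> ('e \<Rightarrow> 'e \<Rightarrow> 'e) \<Rightarrow> ('e \<Rightarrow> 'e \<Rightarrow> 'e)
   \<Rightarrow> 'e \<Rightarrow> 'e \<Rightarrow> 'e" where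
  "torsion smul circ nabla X Y = nabla X Y - nabla Y X - courant_bracket smul circ X Y"

definition parallel :: "('e \<Rightarrow> 'e \<Rightarrow> 'e::ab_group_add) \<Rightarrow> ('e \<Rightarrow> 'e) \<Rightarrow> bool" where
  "parallel nabla P \<longleftrightarrow> (\<forall>X Y. nabla X (P Y) - P (nabla X Y) = 0)"

end

theory Submission
  imports Defs
begin

(* Since the Courant bracket is the skew part of the Dorfman bracket,
   [[X,Y]] = X o Y - D<X,Y>, the torsion hypothesis rewrites the Dorfman bracket as
     X o Y = (nabla_X Y - nabla_Y X) + C(X,Y),
     C(X,Y) = D<X,Y> - I D<X,IY> - J D<X,JY> - K D<X,KY>.
   The Nijenhuis concomitant N_{F,G} is additive in the bracket it is built from, so it
   suffices to show that both summands have vanishing concomitant: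
   - the antisymmetrised connection, because nabla commutes with I and J;
   - the correction C, by the quaternion relations and the skew-adjointness of
     I, J, K for the pairing (pure algebra, using only that D is additive). *)

locale quaternion_triple =
  I: additive I + J: additive J + K: additive K
  for I J K :: "'e::ab_group_add \<Rightarrow> 'e" +
  assumes I_sq: "I (I x) = - x" and J_sq: "J (J x) = - x" and K_sq: "K (K x) = - x"
    and IJK: "I (J (K x)) = - x"
begin

lemma IJ: "I (J x) = K x"
  using IJK[of "K x"] by (simp add: K_sq J.minus I.minus)

lemma JK: "J (K x) = I x"
  using arg_cong[OF IJK[of x], of I] by (simp add: I_sq I.minus)

lemma KI: "K (I x) = J x"
  using arg_cong[OF JK[of "I x"], of J] by (simp add: I_sq J_sq J.minus)

lemma JI: "J (I x) = - K x"
  using arg_cong[OF JK[of x], of J] by (simp add: J_sq)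

lemma IK: "I (K x) = - J x"
  using arg_cong[OF IJ[of x], of I] by (simp add: I_sq)

lemma KJ: "K (J x) = - I x"
  using arg_cong[OF KI[of x], of K] by (simp add: K_sq)

lemmas quaternion_table = I_sq J_sq K_sq IJ JK KI JI IK KJ

end

lemma almost_hypercomplex_quaternion_triple:
  assumes "almost_hypercomplex smul pair I J K"
  shows "quaternion_triple I J K"
  using assms unfolding almost_hypercomplex_def c_linear_def
  by (unfold_locales) auto

lemma nijenhuis_concomitant_bracket_add:
  assumes "additive F" "additive G"
  shows "nijenhuis_concomitant (\<lambda>X Y. b X Y + c X Y) F G X Y
       = nijenhuis_concomitant b F G X Y + nijenhuis_concomitant c F G X Y"
  using additive.add[OF assms(1)] additive.add[OF assms(2)]
  unfolding nijenhuis_concomitant_def by (simp add: algebra_simps)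

text \<open>The antisymmetrisation of any operation nabla commuting with
  F and G in its second argument has vanishing concomitant; the terms
  cancel pairwise, leaving \<open>(GF - FG) nabla_Y X + (FG - GF) nabla_Y X\<close>.\<close>

lemma nijenhuis_concomitant_antisymmetrised_connection:
  assumes "additive F" "additive G"
    and F_comm: "\<And>X Y. nabla X (F Y) = F (nabla X Y)"
    and G_comm: "\<And>X Y. nabla X (G Y) = G (nabla X Y)"
  shows "nijenhuis_concomitant (\<lambda>X Y. nabla X Y - nabla Y X) F G X Y = 0"
  unfolding nijenhuis_concomitant_def
  by (simp only: F_comm G_comm additive.diff[OF assms(1)] additive.diff[OF assms(2)])
    (simp add: algebra_simps)

text \<open>The part of the Dorfman bracket not accounted for by the connection.\<close>

definition quaternionic_correction ::
  "('e \<Rightarrow> 'e \<Rightarrow> 'f) \<Rightarrow> ('f \<Rightarrow> 'e::ab_group_add) \<Rightarrow> ('e \<Rightarrow> 'e) \<Rightarrow> ('e \<Rightarrow> 'e) \<Rightarrow> ('e \<Rightarrow> 'e)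
   \<Rightarrow> 'e \<Rightarrow> 'e \<Rightarrow> 'e" where
  "quaternionic_correction pair D I J K X Y =
     D (pair X Y) - (I (D (pair X (I Y))) + J (D (pair X (J Y))) + K (D (pair X (K Y))))"

locale orthogonal_quaternion_triple = quaternion_triple I J K
  for I J K :: "'e::ab_group_add \<Rightarrow> 'e" +
  fixes pair :: "'e \<Rightarrow> 'e \<Rightarrow> 'f::ab_group_add"
  assumes pair_add: "pair (x + y) z = pair x z + pair y z"
    and pair_sym: "pair x y = pair y x"
    and I_orth: "pair (I x) (I y) = pair x y"
    and J_orth: "pair (J x) (J y) = pair x y"
    and K_orth: "pair (K x) (K y) = pair x y"
begin

lemma pair_minus_left: "pair (- x) y = - pair x y"
  using additive.minus[of "\<lambda>x. pair x y"] pair_add by (simp add: additive_def)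

lemma pair_minus_right: "pair x (- y) = - pair x y"
  using pair_minus_left pair_sym by metis

text \<open>Orthogonal complex structures are skew-adjoint:
  \<open><IX,Y> = <I(IX),IY> = -<X,IY>\<close>.\<close>

lemma I_skew: "pair (I x) y = - pair x (I y)"
  by (metis I_sq I_orth pair_minus_left)

lemma J_skew: "pair (J x) y = - pair x (J y)"
  by (metis J_sq J_orth pair_minus_left)

lemma K_skew: "pair (K x) y = - pair x (K y)"
  by (metis K_sq K_orth pair_minus_left)

text \<open>The correction term has vanishing concomitant \<open>N_{I,J}\<close>: after using the
  multiplication table and skew-adjointness, all D-terms cancel in pairs.\<close>

lemma nijenhuis_concomitant_correction:
  assumes D: "additive D"
  shows "nijenhuis_concomitant (quaternionic_correction pair D I J K) I J X Y = 0"
  unfolding nijenhuis_concomitant_def quaternionic_correction_def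
  by (simp add: I.add J.add K.add I.diff J.diff K.diff I.minus J.minus K.minus
      additive.minus[OF D] quaternion_table I_skew J_skew K_skew
      pair_minus_left pair_minus_right algebra_simps)

end

lemma courant_algebroid_basic [rule_format]:
  assumes "courant_algebroid smul rho pair circ D"
  shows "module smul"
    and "\<forall>x. is_derivation (rho x)"
    and "\<forall>x y z. pair (x + y) z = pair x z + pair y z"
    and "\<forall>x y. pair x y = pair y x"
    and "\<forall>x. (\<forall>y. pair x y = 0) \<longrightarrow> x = 0"
    and "\<forall>f x. pair (D f) x = of_real (1/2) * rho x f"
    and "\<forall>x y. circ x y + circ y x = smul 2 (D (pair x y))"
  using assms unfolding courant_algebroid_def by - (elim conjE, assumption)+

text \<open>D is additive: by nondegeneracy of the pairing, since
  \<open><D(f+g), y> = rho(y)(f+g)/2\<close> and the anchor takes values in derivations.\<close>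

lemma courant_algebroid_D_additive:
  assumes CA: "courant_algebroid smul rho pair circ D"
  shows "additive D"
proof
  fix f g
  note CA_facts = courant_algebroid_basic[OF CA]
  have pair_add: "additive (\<lambda>x. pair x y)" for y
    using CA_facts(3) by (simp add: additive_def)
  have "pair (D (f + g) - (D f + D g)) y = 0" for y
  proof -
    have rho_add: "rho y (f + g) = rho y f + rho y g"
      using CA_facts(2)[of y] by (simp add: is_derivation_def)
    have "pair (D (f + g) - (D f + D g)) y = pair (D (f + g)) y - (pair (D f) y + pair (D g) y)"
      by (simp add: additive.diff[OF pair_add] additive.add[OF pair_add])
    also have "\<dots> = 0"
      by (simp add: CA_facts(6) rho_add algebra_simps)
    finally show ?thesis .
  qed
  then show "D (f + g) = D f + D g"
    using CA_facts(5)[of "D (f + g) - (D f + D g)"] by simp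
qed

lemma courant_bracket_eq:
  fixes smul :: "'f::{real_algebra_1,comm_ring_1} \<Rightarrow> 'e::ab_group_add \<Rightarrow> 'e"
  assumes CA: "courant_algebroid smul rho pair circ D"
  shows "courant_bracket smul circ X Y = circ X Y - D (pair X Y)"
proof -
  note CA_facts = courant_algebroid_basic[OF CA]
  interpret module smul by (rule CA_facts(1))
  have sym_part: "circ Y X = smul 2 (D (pair X Y)) - circ X Y"
    using CA_facts(7)[of X Y] by (simp add: eq_diff_eq add.commute)
  have two: "smul 2 z = z + z" for z
    using scale_left_distrib[of 1 1 z] by simp
  have half: "of_real (1/2) * (2::'f) = 1"
    using of_real_mult[of "1/2" 2, symmetric] by simp
  have "circ X Y - circ Y X = smul 2 (circ X Y - D (pair X Y))"
    unfolding sym_part scale_right_diff_distrib two by simp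
  then show ?thesis
    unfolding courant_bracket_def by (simp add: half)
qed

theorem mainTheorem7:
  fixes smul :: "'f::{real_algebra_1,comm_ring_1} \<Rightarrow> 'e::ab_group_add \<Rightarrow> 'e"
    and rho :: "'e \<Rightarrow> 'f \<Rightarrow> 'f"
    and pair :: "'e \<Rightarrow> 'e \<Rightarrow> 'f"
    and circ :: "'e \<Rightarrow> 'e \<Rightarrow> 'e"
    and D :: "'f \<Rightarrow> 'e"
    and I J K :: "'e \<Rightarrow> 'e"
  assumes CA: "courant_algebroid smul rho pair circ D"
    and HC: "almost_hypercomplex smul pair I J K"
    and conn: "\<exists>nabla. hypercomplex_connection smul rho pair D I J K nabla
       \<and> parallel nabla I \<and> parallel nabla J \<and> parallel nabla K
       \<and> (\<forall>X Y. torsion smul circ nabla X Y =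
            I (D (pair X (I Y))) + J (D (pair X (J Y))) + K (D (pair X (K Y))))"
  shows "\<forall>X Y. nijenhuis_concomitant circ I J X Y = 0"
proof (intro allI)
  fix X Y
  obtain nabla where pI: "parallel nabla I" and pJ: "parallel nabla J"
    and tor: "\<And>X Y. torsion smul circ nabla X Y =
            I (D (pair X (I Y))) + J (D (pair X (J Y))) + K (D (pair X (K Y)))"
    using conn by blast
  interpret orthogonal_quaternion_triple I J K pair
  proof (rule orthogonal_quaternion_triple.intro[OF almost_hypercomplex_quaternion_triple[OF HC]])
    show "orthogonal_quaternion_triple_axioms I J K pair"
      using HC courant_algebroid_basic(3,4)[OF CA]
      unfolding orthogonal_quaternion_triple_axioms_def almost_hypercomplex_def by blast
  qed
  have circ_split: "circ = (\<lambda>X Y. (nabla X Y - nabla Y X) + quaternionic_correction pair D I J K X Y)"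
    using tor by (auto simp: torsion_def courant_bracket_eq[OF CA] quaternionic_correction_def
        algebra_simps intro!: ext)
  have "nijenhuis_concomitant (\<lambda>X Y. nabla X Y - nabla Y X) I J X Y = 0"
    using pI pJ by (intro nijenhuis_concomitant_antisymmetrised_connection)
      (unfold_locales, simp_all add: parallel_def)
  moreover have "nijenhuis_concomitant (quaternionic_correction pair D I J K) I J X Y = 0"
    using nijenhuis_concomitant_correction[OF courant_algebroid_D_additive[OF CA]] .
  ultimately show "nijenhuis_concomitant circ I J X Y = 0"
    unfolding circ_split
    by (subst nijenhuis_concomitant_bracket_add) (unfold_locales, simp)
qed

end
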